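(* Let $\Omega>0$ be fixed and for each $\lambda>1/\pi$ let $w^\lambda$ be a maximizer of $\mathcal{E}$ over $K_\lambda(D)$. With $\varepsilon=(\pi\lambda)^{-1/2}$, as $\lambda\to+\infty$, $$\mathcal{E}(w^\lambda)=-\frac{1}{4\pi}\ln\varepsilon+O(1).$$
   Context: $D$ is the open unit disk in $\mathbb{R}^2$; $G(x,y)=-\frac{1}{2\pi}\ln|x-y|-h(x,y)$ is the Green's function of $-\Delta$ in $D$ with zero Dirichlet boundary condition, $h(x,y)=-\frac{1}{2\pi}\ln|y|-\frac{1}{2\pi}\ln|x-\frac{y}{|y|^2}|$. $K_\lambda(D)=\{w\in L^\infty(D):0\le w\le\lambda\text{ a.e.},\ \int_D w=1\}$, $\mathcal{E}(w)=\frac12\int_D\int_D G(x,y)w(x)w(y)dxdy+\frac{\Omega}{2}\int_D|x|^2w(x)dx$; a maximizer is $w^\lambda\in K_\lambda(D)$ with $\mathcal{E}(w^\lambda)=\sup_{K_\lambda(D)}\mathcal{E}$. $O(1)$ denotes a quantity bounded independently of $\lambda$. *)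

theory Defs
  imports "HOL-Analysis.Analysis"
begin

definition unit_disk :: "(real^2) set" where
  "unit_disk = ball 0 1"

definition green_h :: "real^2 \<Rightarrow> real^2 \<Rightarrow> real" where
  "green_h x y = - (1/(2*pi)) * ln (norm y) - (1/(2*pi)) * ln (norm (x - y /\<^sub>R (norm y)^2))"

text \<open>Green's function of \<open>-\<Delta>\<close> in the unit disk with zero Dirichlet data.\<close>
definition green :: "real^2 \<Rightarrow> real^2 \<Rightarrow> real" where
  "green x y = - (1/(2*pi)) * ln (norm (x - y)) - green_h x y"

definition K_lambda :: "real \<Rightarrow> (real^2 \<Rightarrow> real) set" where
  "K_lambda lam = {w. set_borel_measurable lborel unit_disk w
                     \<and> (AE x in lborel. x \<in> unit_disk \<longrightarrow> 0 \<le> w x \<and> w x \<le> lam)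
                     \<and> set_integrable lborel unit_disk w
                     \<and> (LINT x:unit_disk|lborel. w x) = 1}"

definition energy :: "real \<Rightarrow> (real^2 \<Rightarrow> real) \<Rightarrow> real" where
  "energy \<Omega> w =
     (1/2) * (LINT x:unit_disk|lborel. (LINT y:unit_disk|lborel. green x y * w x * w y))
     + (\<Omega>/2) * (LINT x:unit_disk|lborel. (norm x)^2 * w x)"

end

theory Submission
  imports Defs
begin

text \<open>On \<open>D \<times> D\<close> one has \<open>2\<pi> G(x,y) = ln \<bar>\<bar>y\<bar> x - y/\<bar>y\<bar>\<bar> - ln \<bar>x - y\<bar>\<close>, and the reflected distance
  lies in \<open>[1 - \<bar>x\<bar>\<bar>y\<bar>, 2]\<close>. Hence for \<open>0 < r \<le> 1\<close>,
  \<open>2\<pi> G(x,y) \<le> ln\<^sup>+ (r/\<bar>x - y\<bar>) - ln r + ln 2\<close>, and a density \<open>0 \<le> w \<le> \<lambda>\<close> of unit mass charges the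
  truncated logarithm \<open>ln\<^sup>+ (r/\<bar>x - y\<bar>)\<close> with at most \<open>2\<pi>\<lambda>r\<^sup>2\<close>. Taking \<open>r = \<epsilon> = (\<pi>\<lambda>) powr (-1/2)\<close>,
  every admissible \<open>w\<close> has energy at most \<open>-(1/4\<pi>) ln \<epsilon> + O(1)\<close>. Conversely the patch
  \<open>\<lambda> 1\<^sub>B\<^sub>\<epsilon>\<close> is admissible and \<open>2\<pi> G \<ge> -ln \<epsilon> - 2 ln 2\<close> on \<open>B\<^sub>\<epsilon> \<times> B\<^sub>\<epsilon>\<close>, so the maximal energy is at
  least \<open>-(1/4\<pi>) ln \<epsilon> - O(1)\<close>.\<close>

lemma emeasure_cball_real2:
  fixes c :: "real^2"
  assumes "0 \<le> r"
  shows "emeasure lborel (cball c r) = ennreal (pi * r^2)"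
  using emeasure_cball[OF assms, of c] unit_ball_vol_numeral(1)[of Num.One] by simp

lemma emeasure_ball_real2:
  fixes c :: "real^2"
  assumes "0 \<le> r"
  shows "emeasure lborel (ball c r) = ennreal (pi * r^2)"
  using emeasure_ball[OF assms, of c] unit_ball_vol_numeral(1)[of Num.One] by simp

definition log_bump :: "real^2 \<Rightarrow> real \<Rightarrow> real^2 \<Rightarrow> real" where
  "log_bump c r y = indicator (cball c r) y * ln (r / dist y c)"

lemma log_bump_nonneg: "0 < r \<Longrightarrow> 0 \<le> log_bump c r y"
  by (cases "y = c") (auto simp: log_bump_def indicator_def dist_commute)

lemma borel_measurable_log_bump[measurable]: "log_bump c r \<in> borel_measurable lborel"
proof -
  have "(\<lambda>y::real^2. ln (r / dist y c)) \<in> borel_measurable lborel"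
    unfolding dist_norm by measurable
  then show ?thesis
    unfolding log_bump_def[abs_def]
    by (intro borel_measurable_times borel_measurable_indicator) auto
qed

lemma log_bump_le_dyadic_sum:
  assumes "0 < r"
  shows "ennreal (log_bump c r y) \<le> (\<Sum>k. ennreal (ln 2 * indicator (cball c (r / 2^k)) y))"
proof (cases "y \<in> cball c r \<and> y \<noteq> c")
  case False
  then show ?thesis by (auto simp: log_bump_def indicator_def)
next
  case True
  define d where "d = dist y c"
  have d: "0 < d" "d \<le> r" using True by (auto simp: d_def dist_commute)
  define m where "m = nat \<lfloor>log 2 (r / d)\<rfloor>"
  have log_nonneg: "0 \<le> log 2 (r / d)" using d by simp
  have "2 powr real m \<le> 2 powr log 2 (r / d)"
    using log_nonneg by (simp add: m_def)
  then have pow_le: "2^m \<le> r / d" using d by (simp add: powr_realpow)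
  have "log 2 (r / d) < real m + 1" using log_nonneg by (simp add: m_def)
  then have "ln (r / d) < real (Suc m) * ln 2" using d by (simp add: log_def field_simps)
  moreover have in_balls: "y \<in> cball c (r / 2^k)" if "k < Suc m" for k
  proof -
    have "(2::real)^k \<le> 2^m" using that by (intro power_increasing) auto
    with pow_le have "2^k \<le> r / d" by linarith
    with d have "d \<le> r / 2^k" by (simp add: field_simps)
    then show ?thesis by (simp add: d_def dist_commute)
  qed
  ultimately have "ennreal (log_bump c r y) \<le> ennreal (real (Suc m) * ln 2)"
    using True by (intro ennreal_leI) (simp add: log_bump_def d_def)
  also have "\<dots> = (\<Sum>k<Suc m. ennreal (ln 2 * indicator (cball c (r / 2^k)) y))"
    using in_balls
    by (simp add: ennreal_of_nat_eq_real_of_nat ennreal_mult' indicator_def)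
  also have "\<dots> \<le> (\<Sum>k. ennreal (ln 2 * indicator (cball c (r / 2^k)) y))"
    by (rule sum_le_suminf) auto
  finally show ?thesis .
qed

lemma nn_integral_dyadic_layer:
  fixes c :: "real^2"
  assumes "0 < r"
  shows "(\<integral>\<^sup>+y. ennreal (ln 2 * indicator (cball c (r / 2^k)) y) \<partial>lborel)
    = ennreal (ln 2 * pi * r^2 * (1/4)^k)"
proof -
  have "(\<integral>\<^sup>+y. ennreal (ln 2 * indicator (cball c (r / 2^k)) y) \<partial>lborel)
      = ennreal (ln 2) * emeasure lborel (cball c (r / 2^k))"
    by (subst nn_integral_cmult_indicator[symmetric]) (auto intro!: nn_integral_cong simp: indicator_def)
  also have "\<dots> = ennreal (ln 2 * (pi * (r / 2^k)^2))"
    using assms by (simp add: emeasure_cball_real2 ennreal_mult')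
  also have "(r / 2^k)^2 = r^2 * (1/4)^k"
    by (simp add: field_simps flip: power_mult)
      (simp add: mult.commute[of k] power_mult)
  finally show ?thesis by (simp add: mult_ac)
qed

text \<open>The exact value is \<open>\<pi>r\<^sup>2/2\<close>; counting the dyadic balls \<open>cball c (r/2\<^sup>k)\<close> containing \<open>y\<close> avoids
  polar coordinates.\<close>

lemma nn_integral_log_bump_le:
  assumes "0 < r"
  shows "(\<integral>\<^sup>+y. ennreal (log_bump c r y) \<partial>lborel) \<le> ennreal (2 * pi * r^2)"
proof -
  have summable: "summable (\<lambda>k. ln 2 * pi * r^2 * (1/4::real)^k)"
    by (intro summable_mult summable_geometric) auto
  have "(\<integral>\<^sup>+y. ennreal (log_bump c r y) \<partial>lborel)
      \<le> (\<integral>\<^sup>+y. (\<Sum>k. ennreal (ln 2 * indicator (cball c (r / 2^k)) y)) \<partial>lborel)"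
    by (intro nn_integral_mono log_bump_le_dyadic_sum assms)
  also have "\<dots> = (\<Sum>k. ennreal (ln 2 * pi * r^2 * (1/4)^k))"
    by (subst nn_integral_suminf) (auto intro!: borel_measurable_times borel_measurable_indicator
        simp: nn_integral_dyadic_layer assms borel_closed)
  also have "\<dots> = ennreal (ln 2 * pi * r^2 * (4/3))"
    using summable by (subst suminf_ennreal2) (auto simp: suminf_mult suminf_geometric)
  also have "\<dots> \<le> ennreal (2 * pi * r^2)"
  proof (intro ennreal_leI)
    have "ln 2 * (4/3) \<le> (2::real)" using ln_le_minus_one[of 2] by simp
    then show "ln 2 * pi * r^2 * (4/3) \<le> 2 * pi * r^2"
      using mult_right_mono[of "ln 2 * (4/3)" 2 "pi * r^2"] by (simp add: mult_ac)
  qed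
  finally show ?thesis .
qed

lemma nn_integral_log_bump_density_le:
  fixes W :: "real^2 \<Rightarrow> real"
  assumes [measurable]: "W \<in> borel_measurable lborel"
    and W_bounds: "AE y in lborel. 0 \<le> W y \<and> W y \<le> lam"
    and W_mass: "(\<integral>\<^sup>+y. ennreal (W y) \<partial>lborel) \<le> 1"
    and "0 < r" "0 \<le> L" "0 \<le> lam"
  shows "(\<integral>\<^sup>+y. ennreal ((log_bump c r y + L) * W y) \<partial>lborel) \<le> ennreal (2 * pi * lam * r^2 + L)"
proof -
  have "(\<integral>\<^sup>+y. ennreal ((log_bump c r y + L) * W y) \<partial>lborel)
      \<le> (\<integral>\<^sup>+y. ennreal lam * ennreal (log_bump c r y) + ennreal L * ennreal (W y) \<partial>lborel)"
    using W_bounds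
  proof (intro nn_integral_mono_AE, eventually_elim)
    case (elim y)
    have "W y * log_bump c r y \<le> lam * log_bump c r y"
      using elim log_bump_nonneg[OF \<open>0 < r\<close>, of c y] by (intro mult_right_mono) auto
    then have "(log_bump c r y + L) * W y \<le> lam * log_bump c r y + L * W y"
      by (simp add: algebra_simps)
    then have "ennreal ((log_bump c r y + L) * W y) \<le> ennreal (lam * log_bump c r y + L * W y)"
      by (rule ennreal_leI)
    also have "\<dots> = ennreal lam * ennreal (log_bump c r y) + ennreal L * ennreal (W y)"
      using elim log_bump_nonneg[OF \<open>0 < r\<close>, of c y] assms(5,6)
      by (simp add: ennreal_mult)
    finally show ?case .
  qed
  also have "\<dots> = ennreal lam * (\<integral>\<^sup>+y. ennreal (log_bump c r y) \<partial>lborel)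
      + ennreal L * (\<integral>\<^sup>+y. ennreal (W y) \<partial>lborel)"
    by (simp add: nn_integral_add nn_integral_cmult)
  also have "\<dots> \<le> ennreal lam * ennreal (2 * pi * r^2) + ennreal L * 1"
    using nn_integral_log_bump_le[OF \<open>0 < r\<close>] W_mass by (intro add_mono mult_left_mono) auto
  also have "\<dots> = ennreal (2 * pi * lam * r^2 + L)"
    using assms(5,6) by (simp add: ennreal_mult'[symmetric] mult_ac)
  finally show ?thesis .
qed

lemma integrable_log_bump_density:
  fixes W :: "real^2 \<Rightarrow> real"
  assumes "W \<in> borel_measurable lborel"
    and "AE y in lborel. 0 \<le> W y \<and> W y \<le> lam"
    and "(\<integral>\<^sup>+y. ennreal (W y) \<partial>lborel) \<le> 1"
    and "0 < r" "0 \<le> L" "0 \<le> lam"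
  shows "integrable lborel (\<lambda>y. (log_bump c r y + L) * W y)"
proof (rule integrableI_nonneg)
  show "(\<lambda>y. (log_bump c r y + L) * W y) \<in> borel_measurable lborel"
    using assms(1) by measurable
  show "AE y in lborel. 0 \<le> (log_bump c r y + L) * W y"
    using assms(2) by eventually_elim (use log_bump_nonneg[OF assms(4)] assms(5) in auto)
  show "(\<integral>\<^sup>+y. ennreal ((log_bump c r y + L) * W y) \<partial>lborel) < \<infinity>"
    using nn_integral_log_bump_density_le[OF assms, of c] by (rule le_less_trans) simp
qed

lemma green_measurable[measurable (raw)]:
  assumes "f \<in> borel_measurable M" "g \<in> borel_measurable M"
  shows "(\<lambda>x. green (f x) (g x)) \<in> borel_measurable M"
  unfolding green_def green_h_def using assms by measurable

text \<open>Junk values (\<open>ln 0 = 0\<close>, \<open>0 /\<^sub>R 0 = 0\<close>) give \<open>green_h x 0 = -(1/2\<pi>) ln \<bar>x\<bar>\<close> instead of \<open>0\<close>,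
  so \<open>green x 0 = 0\<close> rather than \<open>-(1/2\<pi>) ln \<bar>x\<bar>\<close>; this only affects a null set.\<close>

lemma green_zero_right: "green x 0 = 0"
  by (simp add: green_def green_h_def)

lemma green_eq_reflection:
  fixes x y :: "real^2"
  assumes "y \<noteq> 0" "0 < norm (norm y *\<^sub>R x - y /\<^sub>R norm y)"
  shows "2 * pi * green x y = ln (norm (norm y *\<^sub>R x - y /\<^sub>R norm y)) - ln (norm (x - y))"
proof -
  define z where "z = x - y /\<^sub>R (norm y)^2"
  have "norm y *\<^sub>R z = norm y *\<^sub>R x - y /\<^sub>R norm y"
    using assms(1) by (simp add: z_def algebra_simps power2_eq_square)
  then have prod: "norm y * norm z = norm (norm y *\<^sub>R x - y /\<^sub>R norm y)"
    by (metis norm_scaleR abs_norm_cancel)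
  have ny: "0 < norm y" using assms(1) by simp
  with prod assms(2) have nz: "0 < norm z" by (metis zero_less_mult_pos)
  have "ln (norm y) + ln (norm z) = ln (norm (norm y *\<^sub>R x - y /\<^sub>R norm y))"
    using ny nz by (simp add: ln_mult flip: prod)
  then show ?thesis
    unfolding green_def green_h_def z_def by (simp add: field_simps)
qed

lemma norm_reflection_bounds:
  fixes x y :: "real^2"
  assumes "y \<noteq> 0" "norm x < 1" "norm y < 1"
  shows "1 - norm x * norm y \<le> norm (norm y *\<^sub>R x - y /\<^sub>R norm y)"
    and "norm (norm y *\<^sub>R x - y /\<^sub>R norm y) \<le> 2"
proof -
  have unit: "norm (y /\<^sub>R norm y) = 1" using assms(1) by simp
  have "norm x * norm y \<le> 1" using assms by (intro mult_le_one) auto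
  then show "norm (norm y *\<^sub>R x - y /\<^sub>R norm y) \<le> 2"
    using norm_triangle_ineq4[of "norm y *\<^sub>R x" "y /\<^sub>R norm y"] unit by (simp add: mult.commute)
  show "1 - norm x * norm y \<le> norm (norm y *\<^sub>R x - y /\<^sub>R norm y)"
    using norm_triangle_ineq3[of "y /\<^sub>R norm y" "norm y *\<^sub>R x"] unit
    by (simp add: norm_minus_commute mult.commute)
qed

text \<open>\<open>r \<le> 1\<close> is only needed at \<open>y = x\<close>, where the left-hand side is the junk value \<open>-ln 0 = 0\<close>.\<close>

lemma neg_ln_dist_le_log_bump:
  fixes x y :: "real^2"
  assumes "0 < r" "r \<le> 1"
  shows "- ln (norm (x - y)) \<le> log_bump x r y - ln r"
proof -
  define d where "d = norm (x - y)"
  have dist: "dist y x = d" by (simp add: d_def dist_norm norm_minus_commute)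
  consider "d = 0" | "0 < d" "d \<le> r" | "r < d"
    unfolding d_def by force
  then show ?thesis
  proof cases
    case 1
    have "ln r \<le> 0" using assms by simp
    with 1 show ?thesis using log_bump_nonneg[OF assms(1), of x y] by (simp add: d_def)
  next
    case 2
    then have "y \<in> cball x r" using dist by (simp add: dist_commute)
    with 2 show ?thesis using assms by (simp add: log_bump_def dist ln_div d_def)
  next
    case 3
    then have "y \<notin> cball x r" using dist by (simp add: dist_commute)
    moreover have "ln r \<le> ln d" using 3 assms by (subst ln_le_cancel_iff) auto
    ultimately show ?thesis by (simp add: log_bump_def d_def)
  qed
qed

lemma green_le_log_bump:
  fixes x y :: "real^2"
  assumes "x \<in> unit_disk" "y \<in> unit_disk" "0 < r" "r \<le> 1"
  shows "2 * pi * green x y \<le> log_bump x r y - ln r + ln 2"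
proof (cases "y = 0")
  case True
  have "ln r \<le> 0" "0 \<le> ln (2::real)" using assms(3,4) by simp_all
  moreover have "2 * pi * green x y = 0" using True by (simp add: green_zero_right)
  ultimately show ?thesis using log_bump_nonneg[OF assms(3), of x y] by linarith
next
  case False
  have norms: "norm x < 1" "norm y < 1" using assms(1,2) by (auto simp: unit_disk_def)
  note reflection = norm_reflection_bounds[OF False norms]
  have "norm x * norm y < 1 * 1" by (rule mult_strict_mono) (use norms in auto)
  then have pos: "0 < norm (norm y *\<^sub>R x - y /\<^sub>R norm y)" using reflection(1) by linarith
  have "2 * pi * green x y = ln (norm (norm y *\<^sub>R x - y /\<^sub>R norm y)) - ln (norm (x - y))"
    by (rule green_eq_reflection[OF False pos])
  also have "\<dots> \<le> ln 2 + (log_bump x r y - ln r)"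
  proof -
    have "ln (norm (norm y *\<^sub>R x - y /\<^sub>R norm y)) \<le> ln 2"
      using reflection(2) pos by simp
    then show ?thesis using neg_ln_dist_le_log_bump[OF assms(3,4), of x y] by linarith
  qed
  finally show ?thesis by simp
qed

lemma green_ge_on_ball:
  fixes x y :: "real^2"
  assumes "x \<in> ball 0 r" "y \<in> ball 0 r" "r^2 \<le> 1/2" "y \<noteq> 0" "y \<noteq> x"
  shows "- ln r - 2 * ln 2 \<le> 2 * pi * green x y"
proof -
  have norms: "norm x < r" "norm y < r" using assms(1,2) by auto
  then have "0 < r" using norm_ge_zero[of x] by linarith
  have "r^2 < 1^2" using assms(3) by simp
  then have "r < 1" by (rule power_less_imp_less_base) simp
  have "norm x * norm y \<le> r^2" using norms by (simp add: power2_eq_square mult_mono')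
  then have half: "1/2 \<le> norm (norm y *\<^sub>R x - y /\<^sub>R norm y)"
    using norm_reflection_bounds(1)[OF assms(4), of x] norms \<open>r < 1\<close> assms(3) by simp
  then have "ln (1/2) \<le> ln (norm (norm y *\<^sub>R x - y /\<^sub>R norm y))"
    by (subst ln_le_cancel_iff) auto
  then have "- ln 2 \<le> ln (norm (norm y *\<^sub>R x - y /\<^sub>R norm y))"
    by (simp add: ln_div)
  moreover have "ln (norm (x - y)) \<le> ln 2 + ln r"
  proof -
    have "norm (x - y) \<le> 2 * r" using norm_triangle_ineq4[of x y] norms by simp
    then have "ln (norm (x - y)) \<le> ln (2 * r)"
      using assms(5) \<open>0 < r\<close> by (subst ln_le_cancel_iff) auto
    then show ?thesis using \<open>0 < r\<close> by (simp add: ln_mult)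
  qed
  moreover have "0 < norm (norm y *\<^sub>R x - y /\<^sub>R norm y)"
    using half by linarith
  ultimately show ?thesis
    using green_eq_reflection[OF assms(4)] by simp
qed

lemma integrable_real_between:
  fixes f g h :: "'a \<Rightarrow> real"
  assumes "f \<in> borel_measurable M" "integrable M g" "integrable M h"
    and "AE x in M. g x \<le> f x \<and> f x \<le> h x"
  shows "integrable M f"
proof (rule Bochner_Integration.integrable_bound)
  show "integrable M (\<lambda>x. \<bar>g x\<bar> + \<bar>h x\<bar>)" using assms(2,3) by auto
  show "AE x in M. norm (f x) \<le> norm (\<bar>g x\<bar> + \<bar>h x\<bar>)"
    using assms(4) by eventually_elim auto
qed fact

lemma double_integral_le:
  fixes F :: "'a \<Rightarrow> 'a \<Rightarrow> real" and W :: "'a \<Rightarrow> real"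
  assumes [measurable]: "W \<in> borel_measurable M"
    and "AE x in M. 0 \<le> W x" and "(\<integral>\<^sup>+x. ennreal (W x) \<partial>M) \<le> 1" and "0 \<le> B"
    and inner: "\<And>x. W x \<noteq> 0 \<Longrightarrow> (\<integral>y. F x y * W y \<partial>M) \<le> B"
  shows "(\<integral>x. (\<integral>y. F x y * W x * W y \<partial>M) \<partial>M) \<le> B"
proof (rule integral_real_bounded[OF \<open>0 \<le> B\<close>])
  have "(\<integral>\<^sup>+x. ennreal (\<integral>y. F x y * W x * W y \<partial>M) \<partial>M) \<le> (\<integral>\<^sup>+x. ennreal B * ennreal (W x) \<partial>M)"
    using assms(2)
  proof (intro nn_integral_mono_AE, eventually_elim)
    case (elim x)
    have "(\<integral>y. F x y * W x * W y \<partial>M) = W x * (\<integral>y. F x y * W y \<partial>M)"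
      by (subst integral_mult_right_zero[symmetric]) (simp add: mult_ac)
    also have "\<dots> \<le> W x * B"
      using elim inner[of x] by (cases "W x = 0") (auto intro: mult_left_mono)
    finally show ?case
      using elim \<open>0 \<le> B\<close> by (simp add: ennreal_mult'[symmetric] ennreal_leI mult.commute)
  qed
  also have "\<dots> = ennreal B * (\<integral>\<^sup>+x. ennreal (W x) \<partial>M)"
    by (simp add: nn_integral_cmult)
  also have "\<dots> \<le> ennreal B"
    using mult_left_mono[OF assms(3), of "ennreal B"] by simp
  finally show "(\<integral>\<^sup>+x. ennreal (\<integral>y. F x y * W x * W y \<partial>M) \<partial>M) \<le> ennreal B" .
qed

lemma double_integral_ge:
  fixes F :: "'a \<Rightarrow> 'a \<Rightarrow> real" and W :: "'a \<Rightarrow> real"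
  assumes "sigma_finite_measure M" and [measurable]: "case_prod F \<in> borel_measurable (M \<Otimes>\<^sub>M M)"
    and W: "integrable M W" "AE x in M. 0 \<le> W x" "integral\<^sup>L M W = 1"
    and inner: "\<And>x. W x \<noteq> 0 \<Longrightarrow> m \<le> (\<integral>y. F x y * W y \<partial>M) \<and> (\<integral>y. F x y * W y \<partial>M) \<le> B"
  shows "m \<le> (\<integral>x. (\<integral>y. F x y * W x * W y \<partial>M) \<partial>M)"
proof -
  have [measurable]: "W \<in> borel_measurable M" using W(1) by (rule borel_measurable_integrable)
  have factor: "(\<integral>y. F x y * W x * W y \<partial>M) = W x * (\<integral>y. F x y * W y \<partial>M)" for x
    by (subst integral_mult_right_zero[symmetric]) (simp add: mult_ac)
  have between: "AE x in M. m * W x \<le> (\<integral>y. F x y * W x * W y \<partial>M)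
      \<and> (\<integral>y. F x y * W x * W y \<partial>M) \<le> B * W x"
    using W(2)
  proof eventually_elim
    case (elim x)
    then show ?case
      using inner[of x] unfolding factor
      by (cases "W x = 0") (auto simp: mult.commute intro: mult_left_mono)
  qed
  have "(\<lambda>x. \<integral>y. F x y * W x * W y \<partial>M) \<in> borel_measurable M"
    by (rule sigma_finite_measure.borel_measurable_lebesgue_integral[OF assms(1)]) measurable
  then have "integrable M (\<lambda>x. \<integral>y. F x y * W x * W y \<partial>M)"
    by (rule integrable_real_between[OF _ _ _ between]) (use W(1) in auto)
  then have "(\<integral>x. m * W x \<partial>M) \<le> (\<integral>x. (\<integral>y. F x y * W x * W y \<partial>M) \<partial>M)"
    using W(1) between by (intro integral_mono_AE) auto
  then show ?thesis using W(3) by simp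
qed

lemma K_lambda_density:
  fixes w :: "real^2 \<Rightarrow> real"
  assumes "w \<in> K_lambda lam" "0 \<le> lam" and W_def: "W = (\<lambda>x. indicator unit_disk x * w x)"
  shows "W \<in> borel_measurable lborel" and "AE x in lborel. 0 \<le> W x \<and> W x \<le> lam"
    and "(\<integral>\<^sup>+x. ennreal (W x) \<partial>lborel) = 1"
proof -
  have ae: "AE x in lborel. x \<in> unit_disk \<longrightarrow> 0 \<le> w x \<and> w x \<le> lam"
    and "integrable lborel W" "integral\<^sup>L lborel W = 1"
    and "W \<in> borel_measurable lborel"
    using assms(1) by (simp_all add: K_lambda_def W_def set_borel_measurable_def
        set_integrable_def set_lebesgue_integral_def)
  moreover show "AE x in lborel. 0 \<le> W x \<and> W x \<le> lam"
    using ae by eventually_elim (use assms(2) in \<open>auto simp: W_def indicator_def\<close>)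
  ultimately show "W \<in> borel_measurable lborel" "(\<integral>\<^sup>+x. ennreal (W x) \<partial>lborel) = 1"
    by (auto simp: nn_integral_eq_integral)
qed

lemma patch_density:
  fixes \<epsilon> lam :: real
  assumes "0 < \<epsilon>" "lam * (pi * \<epsilon>^2) = 1"
    and v_def: "v = (\<lambda>x::real^2. lam * indicator (ball 0 \<epsilon>) x)"
  shows "0 < lam" and "integrable lborel v" and "integral\<^sup>L lborel v = 1"
    and "(\<integral>\<^sup>+x. ennreal (v x) \<partial>lborel) = 1"
proof -
  have "0 < pi * \<epsilon>^2" using assms(1) by simp
  with assms(2) show "0 < lam" by (metis zero_less_mult_pos2 zero_less_one)
  then have "0 \<le> v x" for x by (simp add: v_def)
  have ball: "emeasure lborel (ball (0::real^2) \<epsilon>) = ennreal (pi * \<epsilon>^2)"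
    using assms(1) by (simp add: emeasure_ball_real2)
  then show "integrable lborel v"
    unfolding v_def by (intro integrable_mult_right integrable_real_indicator) auto
  moreover show "integral\<^sup>L lborel v = 1"
    using ball assms(1,2) by (simp add: v_def measure_def)
  ultimately show "(\<integral>\<^sup>+x. ennreal (v x) \<partial>lborel) = 1"
    using \<open>\<And>x. 0 \<le> v x\<close> by (subst nn_integral_eq_integral) auto
qed

lemma patch_in_K_lambda:
  assumes "0 < \<epsilon>" "\<epsilon> \<le> 1" "lam * (pi * \<epsilon>^2) = 1"
  shows "(\<lambda>x::real^2. lam * indicator (ball 0 \<epsilon>) x) \<in> K_lambda lam"
proof -
  note patch = patch_density[OF assms(1,3) refl]
  have "ball 0 \<epsilon> \<subseteq> unit_disk" using assms(2) by (auto simp: unit_disk_def)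
  then have restrict: "indicator unit_disk x * (lam * indicator (ball 0 \<epsilon>) x)
      = lam * indicator (ball 0 \<epsilon>) x" for x :: "real^2"
    by (auto simp: indicator_def)
  have "AE x in lborel. x \<in> unit_disk
      \<longrightarrow> 0 \<le> lam * indicator (ball 0 \<epsilon>) x \<and> lam * indicator (ball 0 \<epsilon>) x \<le> lam"
    using patch(1) by (simp add: indicator_def)
  then show ?thesis
    using patch(2,3) borel_measurable_integrable[OF patch(2)]
    unfolding K_lambda_def set_borel_measurable_def set_integrable_def set_lebesgue_integral_def
    by (simp add: restrict)
qed

lemma energy_eq_density:
  fixes w :: "real^2 \<Rightarrow> real"
  assumes W_def: "W = (\<lambda>x. indicator unit_disk x * w x)"
  shows "energy \<Omega> w = 1/2 * (\<integral>x. (\<integral>y. green x y * W x * W y \<partial>lborel) \<partial>lborel)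
      + \<Omega>/2 * (\<integral>x. (norm x)^2 * W x \<partial>lborel)"
proof -
  have inner: "indicator unit_disk x *\<^sub>R (\<integral>y. indicator unit_disk y *\<^sub>R (green x y * w x * w y) \<partial>lborel)
      = (\<integral>y. green x y * W x * W y \<partial>lborel)" for x
  proof -
    have "(\<lambda>y. green x y * W x * W y)
        = (\<lambda>y. indicator unit_disk x * (indicator unit_disk y * (green x y * w x * w y)))"
      by (simp add: W_def fun_eq_iff mult_ac)
    then show ?thesis by simp
  qed
  have "(\<lambda>x. indicator unit_disk x *\<^sub>R ((norm x)^2 * w x)) = (\<lambda>x. (norm x)^2 * W x)"
    by (simp add: W_def fun_eq_iff mult_ac)
  then show ?thesis
    unfolding energy_def set_lebesgue_integral_def inner by simp
qed

lemma green_potential_le: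
  fixes W :: "real^2 \<Rightarrow> real"
  assumes "W \<in> borel_measurable lborel" "AE y in lborel. 0 \<le> W y \<and> W y \<le> lam"
    and "(\<integral>\<^sup>+y. ennreal (W y) \<partial>lborel) \<le> 1" "0 \<le> lam"
    and outside: "\<And>y. y \<notin> unit_disk \<Longrightarrow> W y = 0"
    and "x \<in> unit_disk" "0 < r" "r \<le> 1"
  shows "2 * pi * (\<integral>y. green x y * W y \<partial>lborel) \<le> 2 * pi * lam * r^2 - ln r + ln 2"
proof -
  define L where "L = ln 2 - ln r"
  have "0 \<le> L" using assms(7,8) by (simp add: L_def)
  have "(\<integral>y. 2 * pi * (green x y * W y) \<partial>lborel) \<le> 2 * pi * lam * r^2 + L"
  proof (rule integral_real_bounded)
    show "0 \<le> 2 * pi * lam * r^2 + L" using \<open>0 \<le> L\<close> assms(4) by simp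
    have "(\<integral>\<^sup>+y. ennreal (2 * pi * (green x y * W y)) \<partial>lborel)
        \<le> (\<integral>\<^sup>+y. ennreal ((log_bump x r y + L) * W y) \<partial>lborel)"
      using assms(2)
    proof (intro nn_integral_mono_AE, eventually_elim)
      case (elim y)
      show ?case
      proof (cases "y \<in> unit_disk")
        case True
        then have "2 * pi * green x y * W y \<le> (log_bump x r y + L) * W y"
          using elim green_le_log_bump[OF \<open>x \<in> unit_disk\<close> True assms(7,8)]
          by (intro mult_right_mono) (auto simp: L_def)
        then show ?thesis by (intro ennreal_leI) (simp add: mult_ac)
      qed (simp add: outside)
    qed
    also have "\<dots> \<le> ennreal (2 * pi * lam * r^2 + L)"
      using \<open>0 \<le> L\<close> assms by (intro nn_integral_log_bump_density_le) auto
    finally show "(\<integral>\<^sup>+y. ennreal (2 * pi * (green x y * W y)) \<partial>lborel)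
        \<le> ennreal (2 * pi * lam * r^2 + L)" .
  qed
  then show ?thesis by (simp add: L_def)
qed

lemma green_potential_patch_ge:
  fixes x :: "real^2"
  assumes "x \<in> ball 0 \<epsilon>" "0 < \<epsilon>" "\<epsilon>^2 \<le> 1/2" "lam * (pi * \<epsilon>^2) = 1"
  defines "v \<equiv> \<lambda>y::real^2. lam * indicator (ball 0 \<epsilon>) y"
  shows "- ln \<epsilon> - 2 * ln 2 \<le> 2 * pi * (\<integral>y. green x y * v y \<partial>lborel)"
proof -
  note patch = patch_density[OF assms(2,4) v_def[THEN meta_eq_to_obj_eq]]
  have [measurable]: "v \<in> borel_measurable lborel" using patch(2) by (rule borel_measurable_integrable)
  have "\<epsilon>^2 < 1^2" using assms(3) by simp
  then have "\<epsilon> < 1" by (rule power_less_imp_less_base) simp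
  then have ball_sub: "ball 0 \<epsilon> \<subseteq> unit_disk" by (auto simp: unit_disk_def)
  define L where "L = ln 2 - ln \<epsilon>"
  have "0 \<le> L" using \<open>\<epsilon> < 1\<close> assms(2) by (simp add: L_def)
  have between: "AE y in lborel. (- ln \<epsilon> - 2 * ln 2) * v y \<le> 2 * pi * green x y * v y
      \<and> 2 * pi * green x y * v y \<le> (log_bump x \<epsilon> y + L) * v y"
    using AE_lborel_singleton[of 0] AE_lborel_singleton[of x]
  proof eventually_elim
    case (elim y)
    show ?case
    proof (cases "y \<in> ball 0 \<epsilon>")
      case True
      have "- ln \<epsilon> - 2 * ln 2 \<le> 2 * pi * green x y"
        using green_ge_on_ball[OF assms(1) True assms(3)] elim by simp
      moreover have "2 * pi * green x y \<le> log_bump x \<epsilon> y + L"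
        using green_le_log_bump[of x y \<epsilon>] ball_sub assms(1,2) True \<open>\<epsilon> < 1\<close>
        unfolding L_def by force
      ultimately show ?thesis
        using patch(1) True by (simp add: v_def)
    qed (simp add: v_def)
  qed
  have "integrable lborel (\<lambda>y. 2 * pi * green x y * v y)"
  proof (rule integrable_real_between[OF _ _ _ between])
    show "integrable lborel (\<lambda>y. (log_bump x \<epsilon> y + L) * v y)"
      using patch \<open>0 \<le> L\<close> assms(2)
      by (intro integrable_log_bump_density[where lam = lam]) (auto simp: v_def)
  qed (use patch(2) in auto)
  then have "(\<integral>y. (- ln \<epsilon> - 2 * ln 2) * v y \<partial>lborel) \<le> (\<integral>y. 2 * pi * green x y * v y \<partial>lborel)"
    using patch(2) between by (intro integral_mono_AE) auto
  then show ?thesis using patch(3) by (simp add: mult.assoc)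
qed

lemma second_moment_le_one:
  fixes W :: "real^2 \<Rightarrow> real"
  assumes "AE x in lborel. 0 \<le> W x" "(\<integral>\<^sup>+x. ennreal (W x) \<partial>lborel) \<le> 1"
    and outside: "\<And>x. x \<notin> unit_disk \<Longrightarrow> W x = 0"
  shows "(\<integral>x. (norm x)^2 * W x \<partial>lborel) \<le> 1"
proof (rule integral_real_bounded)
  have "(\<integral>\<^sup>+x. ennreal ((norm x)^2 * W x) \<partial>lborel) \<le> (\<integral>\<^sup>+x. ennreal (W x) \<partial>lborel)"
    using assms(1)
  proof (intro nn_integral_mono_AE, eventually_elim)
    case (elim x)
    show ?case
    proof (cases "x \<in> unit_disk")
      case True
      then have "(norm x)^2 \<le> 1" by (simp add: unit_disk_def abs_square_le_1)
      then show ?thesis using elim by (intro ennreal_leI) (simp add: mult_left_le_one_le)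
    qed (simp add: outside)
  qed
  then show "(\<integral>\<^sup>+x. ennreal ((norm x)^2 * W x) \<partial>lborel) \<le> ennreal 1" using assms(2) by simp
qed simp

lemma energy_le:
  fixes w :: "real^2 \<Rightarrow> real"
  assumes "w \<in> K_lambda lam" "0 < \<epsilon>" "\<epsilon> \<le> 1" "lam * (pi * \<epsilon>^2) = 1" "0 \<le> \<Omega>"
  shows "energy \<Omega> w \<le> - (1/(4*pi)) * ln \<epsilon> + (2 + ln 2)/(4*pi) + \<Omega>/2"
proof -
  define W where "W = (\<lambda>x. indicator unit_disk x * w x)"
  have "0 \<le> lam" using patch_density(1)[OF assms(2,4) refl] by simp
  note density = K_lambda_density[OF assms(1) this W_def]
  have W_nonneg: "AE x in lborel. 0 \<le> W x" using density(2) by eventually_elim simp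
  have "(\<integral>x. (\<integral>y. green x y * W x * W y \<partial>lborel) \<partial>lborel) \<le> (2 - ln \<epsilon> + ln 2) / (2*pi)"
  proof (rule double_integral_le[OF density(1) W_nonneg])
    show "(\<integral>\<^sup>+x. ennreal (W x) \<partial>lborel) \<le> 1" using density(3) by simp
    have "ln \<epsilon> \<le> 0" using assms(2,3) by simp
    then show "0 \<le> (2 - ln \<epsilon> + ln 2) / (2*pi)" by simp
  next
    fix x assume "W x \<noteq> 0"
    then have "x \<in> unit_disk" by (cases "x \<in> unit_disk") (simp_all add: W_def)
    have "2 * pi * (\<integral>y. green x y * W y \<partial>lborel) \<le> 2 * pi * lam * \<epsilon>^2 - ln \<epsilon> + ln 2"
      using density(3) \<open>0 \<le> lam\<close> \<open>x \<in> unit_disk\<close> assms(2,3)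
      by (intro green_potential_le[OF density(1,2)]) (auto simp: W_def)
    also have "2 * pi * lam * \<epsilon>^2 = 2" using assms(4) by (simp add: algebra_simps)
    finally show "(\<integral>y. green x y * W y \<partial>lborel) \<le> (2 - ln \<epsilon> + ln 2) / (2*pi)"
      by (simp add: field_simps)
  qed
  moreover have "(\<integral>x. (norm x)^2 * W x \<partial>lborel) \<le> 1"
    using W_nonneg density(3) by (intro second_moment_le_one) (auto simp: W_def)
  ultimately have "1/2 * (\<integral>x. (\<integral>y. green x y * W x * W y \<partial>lborel) \<partial>lborel)
      + \<Omega>/2 * (\<integral>x. (norm x)^2 * W x \<partial>lborel) \<le> 1/2 * ((2 - ln \<epsilon> + ln 2) / (2*pi)) + \<Omega>/2 * 1"
    using assms(5) by (intro add_mono mult_left_mono) auto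
  then have "energy \<Omega> w \<le> 1/2 * ((2 - ln \<epsilon> + ln 2) / (2*pi)) + \<Omega>/2 * 1"
    by (simp only: energy_eq_density[OF W_def])
  also have "\<dots> = - (1/(4*pi)) * ln \<epsilon> + (2 + ln 2)/(4*pi) + \<Omega>/2"
    by (simp add: field_simps)
  finally show ?thesis .
qed

lemma energy_patch_ge:
  assumes "0 < \<epsilon>" "\<epsilon>^2 \<le> 1/2" "lam * (pi * \<epsilon>^2) = 1" "0 \<le> \<Omega>"
  defines "v \<equiv> \<lambda>x::real^2. lam * indicator (ball 0 \<epsilon>) x"
  shows "- (1/(4*pi)) * ln \<epsilon> - ln 2 / (2*pi) \<le> energy \<Omega> v"
proof -
  note patch = patch_density[OF assms(1,3) v_def[THEN meta_eq_to_obj_eq]]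
  have "\<epsilon>^2 < 1^2" using assms(2) by simp
  then have "\<epsilon> < 1" by (rule power_less_imp_less_base) simp
  then have ball_sub: "ball 0 \<epsilon> \<subseteq> unit_disk" by (auto simp: unit_disk_def)
  have restrict: "(\<lambda>x. indicator unit_disk x * v x) = v"
    using ball_sub by (force simp: v_def indicator_def fun_eq_iff)
  have v_bounds: "0 \<le> v x \<and> v x \<le> lam" for x using patch(1) by (simp add: v_def indicator_def)
  have v_outside: "v x = 0" if "x \<notin> unit_disk" for x
    using that ball_sub by (auto simp: v_def indicator_def)
  have "(- ln \<epsilon> - 2 * ln 2) / (2*pi) \<le> (\<integral>x. (\<integral>y. green x y * v x * v y \<partial>lborel) \<partial>lborel)"
  proof (rule double_integral_ge[OF sigma_finite_lborel _ patch(2) _ patch(3)])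
    show "case_prod green \<in> borel_measurable (lborel \<Otimes>\<^sub>M lborel)" by measurable
    show "AE x in lborel. 0 \<le> v x" using v_bounds by simp
  next
    fix x assume "v x \<noteq> 0"
    then have "x \<in> ball 0 \<epsilon>" by (cases "x \<in> ball 0 \<epsilon>") (simp_all add: v_def)
    have "- ln \<epsilon> - 2 * ln 2 \<le> 2 * pi * (\<integral>y. green x y * v y \<partial>lborel)"
      using green_potential_patch_ge[OF \<open>x \<in> ball 0 \<epsilon>\<close> assms(1-3)] by (simp add: v_def)
    moreover have "2 * pi * (\<integral>y. green x y * v y \<partial>lborel) \<le> 2 * pi * lam * \<epsilon>^2 - ln \<epsilon> + ln 2"
      using patch v_bounds v_outside ball_sub \<open>x \<in> ball 0 \<epsilon>\<close> assms(1) \<open>\<epsilon> < 1\<close>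
      by (intro green_potential_le) auto
    ultimately show "(- ln \<epsilon> - 2 * ln 2) / (2*pi) \<le> (\<integral>y. green x y * v y \<partial>lborel)
        \<and> (\<integral>y. green x y * v y \<partial>lborel) \<le> (2 * pi * lam * \<epsilon>^2 - ln \<epsilon> + ln 2) / (2*pi)"
      by (simp add: field_simps)
  qed
  moreover have "0 \<le> (\<integral>x. (norm x)^2 * v x \<partial>lborel)"
    using v_bounds by (intro integral_nonneg_AE) simp
  ultimately have "1/2 * ((- ln \<epsilon> - 2 * ln 2) / (2*pi)) + \<Omega>/2 * 0
      \<le> 1/2 * (\<integral>x. (\<integral>y. green x y * v x * v y \<partial>lborel) \<partial>lborel)
        + \<Omega>/2 * (\<integral>x. (norm x)^2 * v x \<partial>lborel)"
    using assms(4) by (intro add_mono mult_left_mono) auto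
  then have "1/2 * ((- ln \<epsilon> - 2 * ln 2) / (2*pi)) + \<Omega>/2 * 0 \<le> energy \<Omega> v"
    by (simp only: energy_eq_density[OF restrict[symmetric]])
  then show ?thesis by (simp add: field_simps)
qed

lemma patch_radius:
  fixes lam :: real
  assumes "2 \<le> pi * lam" and \<epsilon>_def: "\<epsilon> = (pi * lam) powr (-1/2)"
  shows "0 < \<epsilon>" and "\<epsilon>^2 \<le> 1/2" and "\<epsilon> \<le> 1" and "lam * (pi * \<epsilon>^2) = 1"
proof -
  have "0 < pi * lam" "lam \<noteq> 0" using assms(1) by auto
  have "\<epsilon>^2 = (pi * lam) powr (-1/2 + -1/2)"
    unfolding \<epsilon>_def by (simp only: power2_eq_square powr_add)
  also have "\<dots> = 1 / (pi * lam)" using \<open>0 < pi * lam\<close> by (simp add: powr_minus_divide)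
  finally have sq: "\<epsilon>^2 = 1 / (pi * lam)" .
  have "1 / (pi * lam) \<le> 1/2" using assms(1) by (intro divide_left_mono) auto
  then have half: "\<epsilon>^2 \<le> 1/2" by (simp add: sq)
  then have "\<epsilon>^2 \<le> 1^2" by simp
  then have "\<epsilon> \<le> 1" by (rule power2_le_imp_le) simp
  moreover have "0 < \<epsilon>" using \<open>0 < pi * lam\<close> \<open>lam \<noteq> 0\<close> by (simp add: \<epsilon>_def)
  moreover have "lam * (pi * \<epsilon>^2) = 1" using sq \<open>lam \<noteq> 0\<close> by simp
  ultimately show "0 < \<epsilon>" "\<epsilon>^2 \<le> 1/2" "\<epsilon> \<le> 1" "lam * (pi * \<epsilon>^2) = 1"
    using half by simp_all
qed

theorem lemma2p6:
  fixes \<Omega> :: real and w :: "real \<Rightarrow> real^2 \<Rightarrow> real"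
  assumes "\<Omega> > 0"
    and "\<And>lam. lam > 1/pi \<Longrightarrow> w lam \<in> K_lambda lam"
    and "\<And>lam. lam > 1/pi \<Longrightarrow> \<forall>v\<in>K_lambda lam. energy \<Omega> v \<le> energy \<Omega> (w lam)"
  shows "\<exists>C \<Lambda>. \<forall>lam\<ge>\<Lambda>.
           \<bar>energy \<Omega> (w lam) - (- (1/(4*pi)) * ln ((pi*lam) powr (-1/2)))\<bar> \<le> C"
proof (intro exI allI impI)
  fix lam :: real
  assume "2/pi \<le> lam"
  then have "2 \<le> pi * lam" and lam: "1/pi < lam" by (simp_all add: field_simps)
  define \<epsilon> where "\<epsilon> = (pi * lam) powr (-1/2)"
  note eps = patch_radius[OF \<open>2 \<le> pi * lam\<close> \<epsilon>_def]
  have "0 \<le> \<Omega>" using assms(1) by simp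
  have upper: "energy \<Omega> (w lam) \<le> - (1/(4*pi)) * ln \<epsilon> + (2 + ln 2)/(4*pi) + \<Omega>/2"
    by (rule energy_le[OF assms(2)[OF lam] eps(1,3,4) \<open>0 \<le> \<Omega>\<close>])
  have "energy \<Omega> (\<lambda>x. lam * indicator (ball 0 \<epsilon>) x) \<le> energy \<Omega> (w lam)"
    using assms(3)[OF lam] patch_in_K_lambda[OF eps(1,3,4)] by blast
  then have lower: "- (1/(4*pi)) * ln \<epsilon> - ln 2 / (2*pi) \<le> energy \<Omega> (w lam)"
    using energy_patch_ge[OF eps(1,2,4) \<open>0 \<le> \<Omega>\<close>] by linarith
  have "0 \<le> ln 2 / (2*pi)" "0 \<le> (2 + ln 2)/(4*pi)" by simp_all
  then show "\<bar>energy \<Omega> (w lam) - (- (1/(4*pi)) * ln ((pi*lam) powr (-1/2)))\<bar>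
      \<le> ln 2 / (2*pi) + (2 + ln 2)/(4*pi) + \<Omega>/2"
    using upper lower \<open>0 \<le> \<Omega>\<close> unfolding \<epsilon>_def[symmetric] by (simp only: abs_le_iff) linarith
qed

end
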